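(* For each integer $k\ge 4$ and each integer $w\ge 4$, $m_2^{(2)}(k-1,w)$ equals the Griesmer upper bound for $m_2^{(2)}(k-1,w)$, i.e. the largest integer $n$ with $n\ge g_2^{(k-3)}(k,n-w)$.
   Context: For a prime power $q$ and $N\ge1$, a multiset of points in $\mathrm{PG}(N,q)$ is a map $\mathcal{K}$ from the points to $\mathbb{Z}_{\ge0}$, with $\mathcal{K}(S)=\sum_{P\in S}\mathcal{K}(P)$; its cardinality is $\mathcal{K}(\mathrm{PG}(N,q))$. Dimensions are projective. For $0\le r\le N-1$ and a positive integer $w$, $m_q^{(r)}(N,w)$ is the maximum cardinality of a multiset of points in $\mathrm{PG}(N,q)$ such that every $r$-dimensional subspace has multiplicity at most $w$. Let $v_j=(q^j-1)/(q-1)$ and, for $1\le s\le k$, $g_q^{(s)}(k,d)=d+\sum_{i=1}^{k-s}\lceil d/(q^iv_s)\rceil$. The Griesmer upper bound for $m_q^{(r)}(N,w)$ is the largest integer $n$ with $n\ge g_q^{(N-r)}(N+1,n-w)$. *)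

theory Defs
  imports Complex_Main
begin

text \<open>A projective point is a 1-dimensional linear subspace; a projective
  r-dimensional subspace is an (r+1)-dimensional linear subspace.\<close>

definition vecs :: "nat \<Rightarrow> (nat \<Rightarrow> 'a::field) set" where
  "vecs N = {v. \<forall>i>N. v i = 0}"

definition lin_subspace_dim :: "nat \<Rightarrow> nat \<Rightarrow> (nat \<Rightarrow> 'a::field) set \<Rightarrow> bool" where
  "lin_subspace_dim N d U \<longleftrightarrow>
     (\<exists>b :: nat \<Rightarrow> nat \<Rightarrow> 'a.
        (\<forall>j<d. b j \<in> vecs N) \<and>
        (\<forall>c :: nat \<Rightarrow> 'a. (\<lambda>i. \<Sum>j<d. c j * b j i) = (\<lambda>i. 0) \<longrightarrow> (\<forall>j<d. c j = 0)) \<and>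
        U = {(\<lambda>i. \<Sum>j<d. c j * b j i) | c :: nat \<Rightarrow> 'a. True})"

definition proj_points :: "nat \<Rightarrow> (nat \<Rightarrow> 'a::field) set set" where
  "proj_points N = {P. lin_subspace_dim N 1 P}"

definition proj_subspaces :: "nat \<Rightarrow> nat \<Rightarrow> (nat \<Rightarrow> 'a::field) set set" where
  "proj_subspaces N r = {S. lin_subspace_dim N (r + 1) S}"

definition mult_of :: "nat \<Rightarrow> ((nat \<Rightarrow> 'a::field) set \<Rightarrow> nat) \<Rightarrow> (nat \<Rightarrow> 'a) set \<Rightarrow> nat" where
  "mult_of N K S = (\<Sum>P\<in>{P \<in> proj_points N. P \<subseteq> S}. K P)"

definition ms_card :: "nat \<Rightarrow> ((nat \<Rightarrow> 'a::field) set \<Rightarrow> nat) \<Rightarrow> nat" where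
  "ms_card N K = (\<Sum>P\<in>proj_points N. K P)"

text \<open>m_q^(r)(N,w) for q = CARD('a): maximum cardinality of a multiset of
  points of PG(N,q) such that every r-dimensional subspace has multiplicity at most w.\<close>
definition m_max :: "'a::{finite,field} itself \<Rightarrow> nat \<Rightarrow> nat \<Rightarrow> nat \<Rightarrow> nat" where
  "m_max TYPE('a) r N w =
     (GREATEST n. \<exists>K :: (nat \<Rightarrow> 'a) set \<Rightarrow> nat.
        ms_card N K = n \<and> (\<forall>S \<in> proj_subspaces N r. mult_of N K S \<le> w))"

definition vq :: "nat \<Rightarrow> nat \<Rightarrow> int" where
  "vq q j = (int q ^ j - 1) div (int q - 1)"

definition griesmer_g :: "nat \<Rightarrow> nat \<Rightarrow> nat \<Rightarrow> int \<Rightarrow> int" where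
  "griesmer_g q s k d = d + (\<Sum>i = 1..k - s. \<lceil>real_of_int d / (real q ^ i * real_of_int (vq q s))\<rceil>)"

definition griesmer_bound :: "nat \<Rightarrow> nat \<Rightarrow> nat \<Rightarrow> nat \<Rightarrow> int" where
  "griesmer_bound q r N w = (GREATEST n :: int. n \<ge> griesmer_g q (N - r) (N + 1) (n - int w))"

end

(*
  Over GF(2) a projective point is {0, x} for a nonzero vector x, so a multiset of points is a
  weight function on the nonzero vectors of GF(2)^(N+1).

  Upper bound: for a multiset of cardinality n, let p be a heaviest point (weight p0) and L a
  heaviest line through p (weight l). Averaging over all points, over the lines through p and over
  the planes through L, each of weight at most w, gives
    n <= (2^(N+1) - 1) p0,   2 (n - p0) <= (2^(N+1) - 2) (l - p0),   4 (n - l) <= (2^(N+1) - 4) (w - l).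
  With v = 2^(N-2) - 1 these say that n - w is at most 2v (w - l), 4v (l - p0) and 8v p0, so the
  three ceilings in the Griesmer function g_2^(N-2)(N+1, n - w) add up to at most w.

  Lower bound: the points outside {0}, outside the hyperplane x_0 = 0 and outside the codimension-2
  subspace x_0 = x_1 = 0 meet every plane in 7, at most 4 and at most 6 points; nonnegative
  combinations of these three multisets and of one extra point attain the Griesmer bound.
*)
theory Submission
  imports Defs "HOL-Library.Function_Algebras" "HOL-Library.FuncSet"
begin

section \<open>Linear subspaces of the coordinate space\<close>

lemma card_vanishing_outside:
  assumes "finite I"
  shows "card {x :: nat \<Rightarrow> 'a::{finite,zero}. \<forall>i. i \<notin> I \<longrightarrow> x i = 0} = card (UNIV :: 'a set) ^ card I"
proof -
  let ?ext = "\<lambda>h i. if i \<in> I then h i else (0::'a)"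
  have inj: "inj_on ?ext (I \<rightarrow>\<^sub>E UNIV)"
  proof (rule inj_onI)
    fix f g assume fg: "f \<in> I \<rightarrow>\<^sub>E UNIV" "g \<in> I \<rightarrow>\<^sub>E UNIV" and eq: "?ext f = ?ext g"
    show "f = g"
    proof (rule PiE_ext[OF fg])
      fix i assume "i \<in> I"
      with fun_cong[OF eq, of i] show "f i = g i" by simp
    qed
  qed
  have "{x. \<forall>i. i \<notin> I \<longrightarrow> x i = 0} = ?ext ` (I \<rightarrow>\<^sub>E UNIV)"
  proof (intro equalityI subsetI)
    fix x :: "nat \<Rightarrow> 'a" assume "x \<in> {x. \<forall>i. i \<notin> I \<longrightarrow> x i = 0}"
    then have "x = ?ext (restrict x I)" by (simp add: fun_eq_iff)
    moreover have "restrict x I \<in> I \<rightarrow>\<^sub>E UNIV" by simp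
    ultimately show "x \<in> ?ext ` (I \<rightarrow>\<^sub>E UNIV)" by (rule image_eqI)
  qed auto
  also have "card \<dots> = card (I \<rightarrow>\<^sub>E (UNIV :: 'a set))"
    using inj by (rule card_image)
  also have "\<dots> = card (UNIV :: 'a set) ^ card I"
    using assms by (rule card_funcsetE)
  finally show ?thesis .
qed

lemma zero_in_vecs [simp]: "0 \<in> vecs N"
  by (simp add: vecs_def)

lemma add_in_vecs: "x \<in> vecs N \<Longrightarrow> y \<in> vecs N \<Longrightarrow> x + y \<in> vecs N"
  by (simp add: vecs_def)

lemma card_vecs_coord_zero:
  assumes "m \<le> N + 1"
  shows "card {x \<in> vecs N :: (nat \<Rightarrow> 'a::{finite,field}) set. \<forall>i<m. x i = 0} = card (UNIV :: 'a set) ^ (N + 1 - m)"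
proof -
  have "{x \<in> vecs N :: (nat \<Rightarrow> 'a) set. \<forall>i<m. x i = 0} = {x. \<forall>i. i \<notin> {m..N} \<longrightarrow> x i = 0}"
  proof (intro equalityI subsetI)
    fix x :: "nat \<Rightarrow> 'a" assume x: "x \<in> {x \<in> vecs N. \<forall>i<m. x i = 0}"
    have "x i = 0" if "i \<notin> {m..N}" for i
      using x that by (cases "i < m") (simp_all add: vecs_def)
    then show "x \<in> {x. \<forall>i. i \<notin> {m..N} \<longrightarrow> x i = 0}" by blast
  qed (simp add: vecs_def)
  then show ?thesis using card_vanishing_outside[of "{m..N}"] assms by simp
qed

lemma card_vecs: "card (vecs N :: (nat \<Rightarrow> 'a::{finite,field}) set) = card (UNIV :: 'a set) ^ (N + 1)"
  using card_vecs_coord_zero[of 0 N, where 'a='a] by simp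

lemma finite_vecs: "finite (vecs N :: (nat \<Rightarrow> 'a::{finite,field}) set)"
proof (rule card_ge_0_finite)
  have "0 < card (UNIV :: 'a set)" by (rule finite_UNIV_card_ge_0) (rule finite_UNIV)
  then show "0 < card (vecs N :: (nat \<Rightarrow> 'a) set)" unfolding card_vecs by (rule zero_less_power)
qed

definition lin_comb :: "nat \<Rightarrow> (nat \<Rightarrow> nat \<Rightarrow> 'a::field) \<Rightarrow> (nat \<Rightarrow> 'a) \<Rightarrow> nat \<Rightarrow> 'a" where
  "lin_comb d b c = (\<lambda>i. \<Sum>j<d. c j * b j i)"

lemma lin_subspace_dim_iff:
  "lin_subspace_dim N d U \<longleftrightarrow>
     (\<exists>b. (\<forall>j<d. b j \<in> vecs N) \<and> (\<forall>c. lin_comb d b c = 0 \<longrightarrow> (\<forall>j<d. c j = 0))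
        \<and> U = range (lin_comb d b))"
  unfolding lin_subspace_dim_def lin_comb_def zero_fun_def by (simp add: full_SetCompr_eq)

lemma lin_comb_diff: "lin_comb d b c - lin_comb d b c' = lin_comb d b (c - c')"
  by (simp add: lin_comb_def fun_eq_iff sum_subtractf left_diff_distrib)

lemma lin_comb_add: "lin_comb d b c + lin_comb d b c' = lin_comb d b (c + c')"
  by (simp add: lin_comb_def fun_eq_iff sum.distrib distrib_right)

lemma lin_comb_zero: "lin_comb d b 0 = 0"
  by (simp add: lin_comb_def fun_eq_iff)

lemma lin_comb_vecs: "\<forall>j<d. b j \<in> vecs N \<Longrightarrow> lin_comb d b c \<in> vecs N"
  by (simp add: lin_comb_def vecs_def)

lemma lin_comb_truncate: "lin_comb d b c = lin_comb d b (\<lambda>j. if j < d then c j else 0)"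
  by (simp add: lin_comb_def)

context
  fixes N d :: nat and U :: "(nat \<Rightarrow> 'a::field) set"
  assumes U: "lin_subspace_dim N d U"
begin

lemma lin_subspace_zero: "0 \<in> U"
proof -
  obtain b where "U = range (lin_comb d b)" using U unfolding lin_subspace_dim_iff by blast
  then show ?thesis by (metis lin_comb_zero rangeI)
qed

lemma lin_subspace_add: "x \<in> U \<Longrightarrow> y \<in> U \<Longrightarrow> x + y \<in> U"
proof -
  obtain b where "U = range (lin_comb d b)" using U unfolding lin_subspace_dim_iff by blast
  then show "x \<in> U \<Longrightarrow> y \<in> U \<Longrightarrow> x + y \<in> U" by (metis lin_comb_add rangeE rangeI)
qed

lemma lin_subspace_subset_vecs: "U \<subseteq> vecs N"
proof -
  obtain b where "\<forall>j<d. b j \<in> vecs N" "U = range (lin_comb d b)"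
    using U unfolding lin_subspace_dim_iff by blast
  then show ?thesis using lin_comb_vecs by blast
qed

end

lemma card_lin_subspace:
  assumes U: "lin_subspace_dim N d (U :: (nat \<Rightarrow> 'a::{finite,field}) set)"
  shows "card U = card (UNIV :: 'a set) ^ d"
proof -
  obtain b where indep: "\<forall>c. lin_comb d b c = 0 \<longrightarrow> (\<forall>j<d. c j = 0)"
    and U_eq: "U = range (lin_comb d b)"
    using U unfolding lin_subspace_dim_iff by blast
  define C where "C = {c :: nat \<Rightarrow> 'a. \<forall>j. j \<notin> {..<d} \<longrightarrow> c j = 0}"
  have "inj_on (lin_comb d b) C"
  proof (rule inj_onI)
    fix c c' assume C: "c \<in> C" "c' \<in> C" and eq: "lin_comb d b c = lin_comb d b c'"
    have "lin_comb d b (c - c') = 0" using eq by (simp flip: lin_comb_diff)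
    then have "\<forall>j<d. (c - c') j = 0" using indep by blast
    then have "\<forall>j<d. c j = c' j" by simp
    show "c = c'"
    proof
      fix j
      show "c j = c' j"
      proof (cases "j < d")
        case False
        then show ?thesis using C unfolding C_def by simp
      qed (use \<open>\<forall>j<d. c j = c' j\<close> in blast)
    qed
  qed
  moreover have "U = lin_comb d b ` C"
  proof (intro equalityI subsetI)
    fix x assume "x \<in> U"
    then obtain c where x: "x = lin_comb d b c" unfolding U_eq by blast
    have "x = lin_comb d b (\<lambda>j. if j < d then c j else 0)"
      unfolding x by (rule lin_comb_truncate)
    moreover have "(\<lambda>j. if j < d then c j else 0) \<in> C" by (simp add: C_def)
    ultimately show "x \<in> lin_comb d b ` C" by blast
  qed (unfold U_eq, blast)
  ultimately have "card U = card C" by (simp add: card_image)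
  also have "\<dots> = card (UNIV :: 'a set) ^ d"
    unfolding C_def using card_vanishing_outside[of "{..<d}", where 'a='a] by simp
  finally show ?thesis by simp
qed

section \<open>Multisets of points\<close>

lemma inj_on_insert_zero: "inj_on (\<lambda>x. {0, x}) (- {0})"
  by (auto simp: inj_on_def doubleton_eq_iff)

lemma proj_point_subset_vecs: "P \<in> proj_points N \<Longrightarrow> P \<subseteq> vecs N"
  unfolding proj_points_def using lin_subspace_subset_vecs by blast

lemma ms_card_eq_mult_of_vecs:
  fixes K :: "(nat \<Rightarrow> 'a::field) set \<Rightarrow> nat"
  shows "ms_card N K = mult_of N K (vecs N)"
proof -
  have "{P \<in> proj_points N. P \<subseteq> vecs N} = (proj_points N :: (nat \<Rightarrow> 'a) set set)"
    using proj_point_subset_vecs by blast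
  then show ?thesis unfolding ms_card_def mult_of_def by (simp only:)
qed

definition subspace_bounded :: "nat \<Rightarrow> nat \<Rightarrow> nat \<Rightarrow> ((nat \<Rightarrow> 'a::field) set \<Rightarrow> nat) \<Rightarrow> bool" where
  "subspace_bounded N r w K \<longleftrightarrow> (\<forall>S \<in> proj_subspaces N r. mult_of N K S \<le> w)"

lemma m_max_eqI:
  fixes K0 :: "(nat \<Rightarrow> 'a::{finite,field}) set \<Rightarrow> nat"
  assumes "subspace_bounded N r w K0"
    and "\<And>K :: (nat \<Rightarrow> 'a) set \<Rightarrow> nat. subspace_bounded N r w K \<Longrightarrow> ms_card N K \<le> ms_card N K0"
  shows "m_max TYPE('a) r N w = ms_card N K0"
  unfolding m_max_def subspace_bounded_def[symmetric]
  by (rule Greatest_equality) (use assms in auto)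

lemma mult_of_add: "mult_of N (K1 + K2) S = mult_of N K1 S + mult_of N K2 S"
  by (simp add: mult_of_def sum.distrib)

lemma mult_of_scale: "mult_of N (\<lambda>P. c * K P) S = c * mult_of N K S"
  by (simp add: mult_of_def sum_distrib_left)

lemma ms_card_add: "ms_card N (K1 + K2) = ms_card N K1 + ms_card N K2"
  by (simp add: ms_card_def sum.distrib)

lemma ms_card_scale: "ms_card N (\<lambda>P. c * K P) = c * ms_card N K"
  by (simp add: ms_card_def sum_distrib_left)

lemma subspace_bounded_add:
  "subspace_bounded N r w1 K1 \<Longrightarrow> subspace_bounded N r w2 K2 \<Longrightarrow> subspace_bounded N r (w1 + w2) (K1 + K2)"
  unfolding subspace_bounded_def mult_of_add by (simp add: add_mono)

lemma subspace_bounded_scale: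
  "subspace_bounded N r w K \<Longrightarrow> subspace_bounded N r (c * w) (\<lambda>P. c * K P)"
  unfolding subspace_bounded_def mult_of_scale by simp

lemma finite_proj_points: "finite (proj_points N :: (nat \<Rightarrow> 'a::{finite,field}) set set)"
proof (rule finite_subset)
  show "proj_points N \<subseteq> Pow (vecs N :: (nat \<Rightarrow> 'a) set)"
    using proj_point_subset_vecs by blast
qed (simp add: finite_vecs)

lemma subspace_bounded_ms_card:
  fixes K :: "(nat \<Rightarrow> 'a::{finite,field}) set \<Rightarrow> nat"
  shows "subspace_bounded N r (ms_card N K) K"
  unfolding subspace_bounded_def mult_of_def ms_card_def
  by (auto intro: sum_mono2 finite_proj_points)

lemma ms_card_point:
  fixes P0 :: "(nat \<Rightarrow> 'a::{finite,field}) set"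
  assumes "P0 \<in> proj_points N"
  shows "ms_card N (\<lambda>P. of_bool (P = P0)) = 1"
proof -
  have "proj_points N \<inter> {P. P = P0} = {P0}" using assms by blast
  then show ?thesis using finite_proj_points[where 'a='a] by (simp add: ms_card_def)
qed

lemma sum_translate:
  fixes g :: "'b::group_add \<Rightarrow> 'c::comm_monoid_add"
  assumes "finite A" and "\<And>y. y \<in> A \<Longrightarrow> c + y \<in> A"
  shows "(\<Sum>y\<in>A. g (c + y)) = (\<Sum>y\<in>A. g y)"
proof -
  have inj: "inj_on (\<lambda>y. c + y) A" by (rule inj_onI) simp
  then have "(\<lambda>y. c + y) ` A = A" using assms by (intro endo_inj_surj) auto
  then show ?thesis using sum.reindex[OF inj, of g] by simp
qed

lemma exists_ge_average:
  fixes g :: "'b \<Rightarrow> nat"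
  assumes "finite A" and "A \<noteq> {}"
  shows "\<exists>x\<in>A. sum g A \<le> card A * g x"
proof -
  have "Max (g ` A) \<in> g ` A" using assms by simp
  then obtain x where x: "x \<in> A" "g x = Max (g ` A)" by (metis imageE)
  then have "\<forall>y\<in>A. g y \<le> g x" using assms(1) by simp
  then show ?thesis using x(1) sum_bounded_above[of A g "g x"] by auto
qed

lemma int_le_diff_mult:
  fixes a b c Q :: nat
  assumes "a \<le> (Q - c) * b" "c \<le> Q"
  shows "int a \<le> (int Q - int c) * int b"
proof -
  have "int a \<le> int ((Q - c) * b)" using assms(1) by (simp only: of_nat_le_iff)
  then show ?thesis using assms(2) by (simp add: of_nat_diff)
qed

definition points_outside :: "(nat \<Rightarrow> 'a::field) set \<Rightarrow> (nat \<Rightarrow> 'a) set \<Rightarrow> nat" where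
  "points_outside U P = of_bool (\<not> P \<subseteq> U)"

section \<open>Evaluating the Griesmer bound\<close>

definition griesmer_tail :: "int \<Rightarrow> int \<Rightarrow> int" where
  "griesmer_tail v d = (\<Sum>i = 1..3. \<lceil>real_of_int d / (2 ^ i * real_of_int v)\<rceil>)"

lemma griesmer_tail_expand:
  "griesmer_tail v d = \<lceil>real_of_int d / real_of_int (2 * v)\<rceil> + \<lceil>real_of_int d / real_of_int (4 * v)\<rceil>
    + \<lceil>real_of_int d / real_of_int (8 * v)\<rceil>"
  by (simp add: griesmer_tail_def eval_nat_numeral atLeastAtMostSuc_conv)

lemma griesmer_g_planes:
  assumes "2 \<le> N"
  shows "griesmer_g 2 (N - 2) (N + 1) d = d + griesmer_tail (2 ^ (N - 2) - 1) d"
proof -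
  have "N + 1 - (N - 2) = 3" using assms by simp
  then show ?thesis by (simp add: griesmer_g_def griesmer_tail_def vq_def)
qed

lemma ceiling_divide_le_iff:
  fixes d m a :: int
  assumes "0 < m"
  shows "\<lceil>real_of_int d / real_of_int m\<rceil> \<le> a \<longleftrightarrow> d \<le> a * m"
proof -
  have "real_of_int d / real_of_int m \<le> real_of_int a \<longleftrightarrow> real_of_int d \<le> real_of_int a * real_of_int m"
    using assms by (simp add: divide_le_eq)
  then show ?thesis by (simp add: ceiling_le_iff flip: of_int_mult)
qed

lemma griesmer_tail_le:
  fixes v d a b c :: int
  assumes "0 < v" "d \<le> a * (2 * v)" "d \<le> b * (4 * v)" "d \<le> c * (8 * v)"
  shows "griesmer_tail v d \<le> a + b + c"
  using assms ceiling_divide_le_iff[of "2 * v" d a] ceiling_divide_le_iff[of "4 * v" d b]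
    ceiling_divide_le_iff[of "8 * v" d c]
  by (simp add: griesmer_tail_expand)

lemma griesmer_tail_ge:
  fixes v d a b c :: int
  assumes "0 < v" "(a - 1) * (2 * v) < d" "(b - 1) * (4 * v) < d" "(c - 1) * (8 * v) < d"
  shows "a + b + c \<le> griesmer_tail v d"
  using assms ceiling_divide_le_iff[of "2 * v" d "a - 1"] ceiling_divide_le_iff[of "4 * v" d "b - 1"]
    ceiling_divide_le_iff[of "8 * v" d "c - 1"]
  by (simp add: griesmer_tail_expand)

lemma griesmer_tail_mono:
  assumes "0 < v" "d \<le> d'"
  shows "griesmer_tail v d \<le> griesmer_tail v d'"
  unfolding griesmer_tail_def
  using assms by (intro sum_mono ceiling_mono divide_right_mono) auto

lemma griesmer_tail_shift_le:
  fixes v t e a b c :: int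
  assumes "1 \<le> v" "0 \<le> t" "e \<le> 2 * a" "e \<le> 4 * b" "e \<le> 8 * c"
  shows "griesmer_tail v (v * (8 * t + e)) \<le> 7 * t + (a + b + c)"
proof -
  have "e * v \<le> (2 * a) * v" "e * v \<le> (4 * b) * v" "e * v \<le> (8 * c) * v"
    using assms by (intro mult_right_mono; simp)+
  then have "griesmer_tail v (v * (8 * t + e)) \<le> (4 * t + a) + (2 * t + b) + (t + c)"
    using assms(1) by (intro griesmer_tail_le) (simp_all add: algebra_simps)
  then show ?thesis by simp
qed

lemma griesmer_tail_shift_gt:
  fixes v t e a b c :: int
  assumes "1 \<le> v" "0 \<le> t" "2 * (a - 1) \<le> e" "4 * (b - 1) \<le> e" "8 * (c - 1) \<le> e"
  shows "7 * t + (a + b + c) \<le> griesmer_tail v (v * (8 * t + e) + 1)"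
proof -
  have "(2 * (a - 1)) * v \<le> e * v" "(4 * (b - 1)) * v \<le> e * v" "(8 * (c - 1)) * v \<le> e * v"
    using assms by (intro mult_right_mono; simp)+
  then have "(4 * t + a) + (2 * t + b) + (t + c) \<le> griesmer_tail v (v * (8 * t + e) + 1)"
    using assms(1) by (intro griesmer_tail_ge) (simp_all add: algebra_simps)
  then show ?thesis by simp
qed

text \<open>For \<open>w \<ge> 4\<close>, \<open>griesmer_excess w\<close> is the largest \<open>m\<close> with
  \<open>\<lceil>m/2\<rceil> + \<lceil>m/4\<rceil> + \<lceil>m/8\<rceil> \<le> w\<close>; this function of \<open>m\<close> grows by 7 when \<open>m\<close> grows by 8.\<close>
definition griesmer_excess :: "nat \<Rightarrow> int" where
  "griesmer_excess w = 8 * int ((w - 4) div 7) + [4, 4, 6, 8, 8, 8, 10] ! ((w - 4) mod 7)"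

lemma griesmer_excess_cases:
  assumes "4 \<le> w"
  obtains t w0 :: nat and e :: int where "w = 7 * t + w0" "griesmer_excess w = 8 * int t + e"
    "(e, w0) \<in> {(4, 4), (4, 5), (6, 6), (8, 7), (8, 8), (8, 9), (10, 10)}"
proof -
  define t where "t = (w - 4) div 7"
  define r where "r = (w - 4) mod 7"
  have w: "w = 7 * t + (r + 4)"
    using assms div_mult_mod_eq[of "w - 4" 7] unfolding t_def r_def by linarith
  have E: "griesmer_excess w = 8 * int t + [4, 4, 6, 8, 8, 8, 10] ! r"
    by (simp add: griesmer_excess_def t_def r_def)
  have "r < 7" by (simp add: r_def)
  then have "([4, 4, 6, 8, 8, 8, 10] ! r, r + 4) \<in> {(4, 4), (4, 5), (6, 6), (8, 7), (8, 8), (8, 9), (10, 10)}"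
    by (auto simp: less_Suc_eq numeral_eq_Suc)
  then show ?thesis using that w E by blast
qed

lemma griesmer_tail_excess:
  fixes v :: int
  assumes "1 \<le> v" "4 \<le> w"
  shows "griesmer_tail v (v * griesmer_excess w) \<le> int w"
    and "int w < griesmer_tail v (v * griesmer_excess w + 1)"
proof -
  obtain t w0 :: nat and e where w: "w = 7 * t + w0" and E: "griesmer_excess w = 8 * int t + e"
    and cases: "(e, w0) \<in> {(4, 4), (4, 5), (6, 6), (8, 7), (8, 8), (8, 9), (10, 10)}"
    using griesmer_excess_cases[OF assms(2)] by blast
  have t: "0 \<le> int t" by simp
  show "griesmer_tail v (v * griesmer_excess w) \<le> int w"
    using cases griesmer_tail_shift_le[OF assms(1) t, of 4 2 1 1] griesmer_tail_shift_le[OF assms(1) t, of 6 3 2 1]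
      griesmer_tail_shift_le[OF assms(1) t, of 8 4 2 1] griesmer_tail_shift_le[OF assms(1) t, of 10 5 3 2]
    unfolding E by (auto simp: w)
  show "int w < griesmer_tail v (v * griesmer_excess w + 1)"
    using cases griesmer_tail_shift_gt[OF assms(1) t, of 3 4 2 1] griesmer_tail_shift_gt[OF assms(1) t, of 4 6 2 1]
      griesmer_tail_shift_gt[OF assms(1) t, of 5 8 3 2] griesmer_tail_shift_gt[OF assms(1) t, of 6 10 3 2]
    unfolding E by (auto simp: w)
qed

lemma le_excess_of_griesmer_tail_le:
  fixes v n :: int
  assumes "1 \<le> v" "4 \<le> w" "griesmer_tail v (n - int w) \<le> int w"
  shows "n \<le> int w + v * griesmer_excess w"
proof (rule ccontr)
  assume "\<not> n \<le> int w + v * griesmer_excess w"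
  then have "griesmer_tail v (v * griesmer_excess w + 1) \<le> griesmer_tail v (n - int w)"
    using assms(1) by (intro griesmer_tail_mono) auto
  then show False using griesmer_tail_excess(2)[OF assms(1,2)] assms(3) by simp
qed

lemma griesmer_bound_planes:
  assumes "3 \<le> N" "4 \<le> w"
  shows "griesmer_bound 2 2 N w = int w + (2 ^ (N - 2) - 1) * griesmer_excess w"
proof -
  define v :: int where "v = 2 ^ (N - 2) - 1"
  have v: "1 \<le> v" using assms(1) one_less_power[of "2::int" "N - 2"] unfolding v_def by linarith
  have cond: "n \<ge> griesmer_g 2 (N - 2) (N + 1) (n - int w) \<longleftrightarrow> griesmer_tail v (n - int w) \<le> int w"
    for n using griesmer_g_planes[of N "n - int w"] assms(1) by (simp add: v_def)
  show ?thesis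
    unfolding griesmer_bound_def cond v_def[symmetric]
  proof (rule Greatest_equality)
    show "griesmer_tail v (int w + v * griesmer_excess w - int w) \<le> int w"
      using griesmer_tail_excess(1)[OF v assms(2)] by simp
  qed (rule le_excess_of_griesmer_tail_le[OF v assms(2)])
qed

lemma griesmer_tail_le_of_counting:
  fixes v n w l p :: int
  assumes v: "1 \<le> v"
    and point: "n \<le> (8 * v + 7) * p"
    and line: "2 * (n - p) \<le> (8 * v + 6) * (l - p)"
    and plane: "4 * (n - l) \<le> (8 * v + 4) * (w - l)"
  shows "griesmer_tail v (n - w) \<le> w"
proof -
  define x y z d where "x = w - l" and "y = l - p" and "z = p" and "d = n - w"
  have dx: "d \<le> x * (2 * v)" using plane unfolding x_def d_def by (simp add: algebra_simps)
  have dy': "d + x \<le> (4 * v + 2) * y" using line unfolding x_def y_def d_def by (simp add: algebra_simps)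
  have dz': "d + x + y \<le> (8 * v + 6) * z" using point unfolding x_def y_def z_def d_def by (simp add: algebra_simps)
  have dy: "d \<le> y * (4 * v)"
  proof -
    have "(4 * v + 2) * d \<le> 4 * v * (d + x)" using dx by (simp add: algebra_simps)
    also have "\<dots> \<le> 4 * v * ((4 * v + 2) * y)" using dy' v by (intro mult_left_mono) auto
    also have "\<dots> = (4 * v + 2) * (y * (4 * v))" by (simp add: algebra_simps)
    finally show ?thesis using v by (simp add: mult_le_cancel_left)
  qed
  have dz: "d \<le> z * (8 * v)"
  proof -
    have "(8 * v + 6) * d \<le> 8 * v * (d + x + y)" using dx dy by (simp add: algebra_simps)
    also have "\<dots> \<le> 8 * v * ((8 * v + 6) * z)" using dz' v by (intro mult_left_mono) auto
    also have "\<dots> = (8 * v + 6) * (z * (8 * v))" by (simp add: algebra_simps)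
    finally show ?thesis using v by (simp add: mult_le_cancel_left)
  qed
  have "griesmer_tail v d \<le> x + y + z" using griesmer_tail_le[of v d x y z] v dx dy dz by simp
  then show ?thesis unfolding d_def x_def y_def z_def by simp
qed

section \<open>Points, lines and planes over GF(2)\<close>

context
  assumes card2: "card (UNIV :: 'a::{finite,field} set) = 2"
begin

lemma gf2_cases: "(x :: 'a) = 0 \<or> x = 1"
proof -
  have "{0, 1} = (UNIV :: 'a set)"
    by (rule card_subset_eq) (simp_all add: card2)
  then show ?thesis by blast
qed

lemma gf2_uminus [simp]: "- (x :: 'a) = x"
proof -
  have "(1 :: 'a) + 1 \<noteq> 1" by (metis add.right_neutral add_left_cancel one_neq_zero)
  then have "(1 :: 'a) + 1 = 0" using gf2_cases[of "1 + 1"] by blast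
  then have "- (1 :: 'a) = 1" by (simp add: add_eq_0_iff)
  then show ?thesis using gf2_cases[of x] by auto
qed

lemma gf2_uminus_vec [simp]: "- (v :: nat \<Rightarrow> 'a) = v"
  by (simp add: fun_eq_iff)

lemma gf2_add_eq_0_iff [simp]: "(u :: nat \<Rightarrow> 'a) + v = 0 \<longleftrightarrow> u = v"
  by (metis add_eq_0_iff gf2_uminus_vec)

lemma gf2_add_self [simp]: "(v :: nat \<Rightarrow> 'a) + v = 0"
  by (simp only: gf2_add_eq_0_iff)

lemma gf2_add_add_self [simp]: "(u :: nat \<Rightarrow> 'a) + (u + v) = v"
  by (simp flip: add.assoc)

lemma gf2_scale: "(\<lambda>i. c * v i) = (if c = 0 then 0 else (v :: nat \<Rightarrow> 'a))"
  using gf2_cases[of c] by (auto simp: fun_eq_iff)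

lemma proj_point_iff: "P \<in> proj_points N \<longleftrightarrow> (\<exists>x \<in> vecs N - {0}. P = {0, (x :: nat \<Rightarrow> 'a)})"
proof
  assume "P \<in> proj_points N"
  then have P: "lin_subspace_dim N 1 P" by (simp add: proj_points_def)
  then obtain x y where xy: "P = {x, y}" "x \<noteq> y"
    using card_lin_subspace[OF P] card2 by (auto simp: card_2_iff)
  then have "P = {0, x} \<or> P = {0, y}" using lin_subspace_zero[OF P] by auto
  then show "\<exists>x \<in> vecs N - {0}. P = {0, x}"
    using xy lin_subspace_subset_vecs[OF P] by (auto simp: doubleton_eq_iff)
next
  assume "\<exists>x \<in> vecs N - {0}. P = {0, x}"
  then obtain x where x: "x \<in> vecs N" "x \<noteq> 0" and P: "P = {0, x}" by blast
  have indep: "\<forall>j<1. c j = 0" if "lin_comb 1 (\<lambda>_. x) c = 0" for c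
  proof -
    have "(\<lambda>i. c 0 * x i) = 0" using that by (simp add: lin_comb_def)
    then show ?thesis using x(2) by (auto simp: gf2_scale split: if_splits)
  qed
  have "range (lin_comb 1 (\<lambda>_. x)) = {0, x}"
  proof
    show "range (lin_comb 1 (\<lambda>_. x)) \<subseteq> {0, x}"
      by (auto simp: lin_comb_def gf2_scale)
    have "0 \<in> range (lin_comb 1 (\<lambda>_. x))"
      by (rule range_eqI[of _ _ 0]) (simp add: lin_comb_def fun_eq_iff)
    moreover have "x \<in> range (lin_comb 1 (\<lambda>_. x))"
      by (rule range_eqI[of _ _ 1]) (simp add: lin_comb_def fun_eq_iff)
    ultimately show "{0, x} \<subseteq> range (lin_comb 1 (\<lambda>_. x))" by simp
  qed
  then have "lin_subspace_dim N 1 P"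
    unfolding lin_subspace_dim_iff P using x(1) indep by (intro exI[of _ "\<lambda>_. x"]) simp
  then show "P \<in> proj_points N" by (simp add: proj_points_def)
qed

lemma proj_points_gf2: "proj_points N = (\<lambda>x. {0, x}) ` (vecs N - {0 :: nat \<Rightarrow> 'a})"
  using proj_point_iff by blast

lemma mult_of_gf2:
  assumes "0 \<in> S"
  shows "mult_of N K S = (\<Sum>x \<in> S \<inter> vecs N - {0 :: nat \<Rightarrow> 'a}. K {0, x})"
proof -
  have "{P \<in> proj_points N. P \<subseteq> S} = (\<lambda>x. {0, x}) ` (S \<inter> vecs N - {0})"
    using assms unfolding proj_points_gf2 by auto
  moreover have "inj_on (\<lambda>x. {0, x}) (S \<inter> vecs N - {0 :: nat \<Rightarrow> 'a})"
    using inj_on_insert_zero by (rule inj_on_subset) blast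
  ultimately show ?thesis unfolding mult_of_def by (simp add: sum.reindex)
qed

lemma card_le_double_coord_zero:
  assumes fin: "finite S" and add: "\<And>x y. x \<in> S \<Longrightarrow> y \<in> S \<Longrightarrow> x + y \<in> S"
  shows "card S \<le> 2 * card {x \<in> S. (x :: nat \<Rightarrow> 'a) j = 0}"
proof (cases "\<exists>s \<in> S. s j \<noteq> 0")
  case False
  then have "{x \<in> S. x j = 0} = S" by blast
  then show ?thesis by simp
next
  case True
  then obtain s where s: "s \<in> S" "s j = 1" using gf2_cases by blast
  let ?Z = "{x \<in> S. x j = 0}" and ?O = "{x \<in> S. x j \<noteq> 0}"
  have "(\<lambda>x. x + s) ` ?O \<subseteq> ?Z"
  proof (rule image_subsetI)
    fix x assume "x \<in> ?O"
    then have "x j = s j" "x \<in> S" using s(2) gf2_cases[of "x j"] by auto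
    then have "(x + s) j = 0" using gf2_add_self[of s] by (metis plus_fun_apply zero_fun_apply)
    with \<open>x \<in> S\<close> show "x + s \<in> ?Z" using add s(1) by blast
  qed
  moreover have "inj_on (\<lambda>x. x + s) ?O" by (rule inj_onI) simp
  ultimately have "card ?O \<le> card ?Z"
    using fin by (metis (no_types, lifting) card_image card_mono finite_subset mem_Collect_eq subsetI)
  moreover have "card S = card ?Z + card ?O"
    using fin by (subst card_Un_disjoint[symmetric]) (auto intro: arg_cong[where f=card])
  ultimately show ?thesis by simp
qed

lemma card_le_coord_zero:
  assumes fin: "finite S" and add: "\<And>x y. x \<in> S \<Longrightarrow> y \<in> S \<Longrightarrow> x + y \<in> S"
  shows "card S \<le> 2 ^ m * card {x \<in> S. \<forall>i<m. (x :: nat \<Rightarrow> 'a) i = 0}"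
proof (induction m)
  case (Suc m)
  let ?T = "{x \<in> S. \<forall>i<m. x i = 0}"
  have "card ?T \<le> 2 * card {x \<in> ?T. x m = 0}"
    by (rule card_le_double_coord_zero) (use fin add in auto)
  moreover have "{x \<in> ?T. x m = 0} = {x \<in> S. \<forall>i<Suc m. x i = 0}"
    by (auto simp: less_Suc_eq)
  ultimately have half: "card ?T \<le> 2 * card {x \<in> S. \<forall>i<Suc m. x i = 0}" by simp
  have "card S \<le> 2 ^ m * card ?T" by (rule Suc.IH)
  also have "\<dots> \<le> 2 ^ m * (2 * card {x \<in> S. \<forall>i<Suc m. x i = 0})"
    using half by (rule mult_left_mono) simp
  finally show ?case by simp
qed simp

lemma proj_plane_through:
  fixes p q y :: "nat \<Rightarrow> 'a"
  assumes vecs: "p \<in> vecs N" "q \<in> vecs N" "y \<in> vecs N"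
    and indep: "p \<noteq> 0" "q \<notin> {0, p}" "y \<notin> {0, p, q, p + q}"
  shows "set [0, p, q, p + q, y, p + y, q + y, p + q + y] \<in> proj_subspaces N 2"
    and "distinct [0, p, q, p + q, y, p + y, q + y, p + q + y]"
proof -
  let ?xs = "[0, p, q, p + q, y, p + y, q + y, p + q + y]"
  define b :: "nat \<Rightarrow> nat \<Rightarrow> 'a" where "b j = (if j = 0 then p else if j = 1 then q else y)" for j
  have comb: "lin_comb 3 b c
      = (if c 0 = 0 then 0 else p) + (if c 1 = 0 then 0 else q) + (if c 2 = 0 then 0 else y)" for c
  proof -
    have "lin_comb 3 b c = (\<lambda>i. c 0 * p i) + (\<lambda>i. c 1 * q i) + (\<lambda>i. c 2 * y i)"
      by (simp add: lin_comb_def b_def fun_eq_iff eval_nat_numeral)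
    then show ?thesis by (simp only: gf2_scale)
  qed
  have b_indep: "\<forall>j<3. c j = 0" if "lin_comb 3 b c = 0" for c
    using that indep gf2_cases[of "c 0"] gf2_cases[of "c 1"] gf2_cases[of "c 2"] unfolding comb
    by (auto simp: less_Suc_eq numeral_3_eq_3 numeral_2_eq_2)
  have b_vecs: "\<forall>j<3. b j \<in> vecs N" using vecs by (simp add: b_def)
  have subspace: "lin_subspace_dim N 3 (range (lin_comb 3 b))"
    unfolding lin_subspace_dim_iff using b_indep b_vecs by blast
  \<comment> \<open>The span has \<open>2^3\<close> elements and lies in \<open>set ?xs\<close>, so the two coincide and \<open>?xs\<close> is distinct.\<close>
  have sub: "range (lin_comb 3 b) \<subseteq> set ?xs"
  proof (rule image_subsetI)
    fix c
    show "lin_comb 3 b c \<in> set ?xs"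
      using gf2_cases[of "c 0"] gf2_cases[of "c 1"] gf2_cases[of "c 2"] unfolding comb by auto
  qed
  have card_range: "card (range (lin_comb 3 b)) = 8"
    using card_lin_subspace[OF subspace] card2 by simp
  have "card (set ?xs) \<le> 8"
    using card_length[of ?xs] by simp
  then have card_xs: "card (set ?xs) = 8"
    using card_mono[OF _ sub] card_range by simp
  have "range (lin_comb 3 b) = set ?xs"
    using card_subset_eq[OF _ sub] card_range card_xs by simp
  then show "set ?xs \<in> proj_subspaces N 2"
    using subspace by (simp add: proj_subspaces_def numeral_3_eq_3)
  show "distinct ?xs"
    using card_xs by (intro card_distinct) simp
qed

lemma weight_plane_through_le:
  fixes p q y :: "nat \<Rightarrow> 'a"
  assumes bounded: "subspace_bounded N 2 w K"
    and vecs: "p \<in> vecs N" "q \<in> vecs N" "y \<in> vecs N"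
    and indep: "p \<noteq> 0" "q \<notin> {0, p}" "y \<notin> {0, p, q, p + q}"
  shows "K {0, p} + K {0, q} + K {0, p + q}
      + (K {0, y} + K {0, p + y} + K {0, q + y} + K {0, p + q + y}) \<le> w"
proof -
  let ?ys = "[p, q, p + q, y, p + y, q + y, p + q + y]"
  have plane: "set (0 # ?ys) \<in> proj_subspaces N 2" and dist: "distinct (0 # ?ys)"
    using proj_plane_through[OF vecs indep] by simp_all
  have "set ?ys \<subseteq> vecs N"
    using plane lin_subspace_subset_vecs by (auto simp: proj_subspaces_def)
  then have "set (0 # ?ys) \<inter> vecs N - {0} = set ?ys" using dist by auto
  then have "mult_of N K (set (0 # ?ys)) = sum_list (map (\<lambda>x. K {0, x}) ?ys)"
    using mult_of_gf2[of "set (0 # ?ys)" N K] dist by (simp add: sum.distinct_set_conv_list)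
  moreover have "mult_of N K (set (0 # ?ys)) \<le> w"
    using bounded plane unfolding subspace_bounded_def by blast
  ultimately show ?thesis by (simp add: add.assoc)
qed

lemma mult_of_points_outside:
  assumes "0 \<in> S" "0 \<in> U"
  shows "mult_of N (points_outside U) S = card (S \<inter> vecs N - (U :: (nat \<Rightarrow> 'a) set))"
proof -
  have "mult_of N (points_outside U) S = (\<Sum>x \<in> S \<inter> vecs N - {0}. of_bool (x \<notin> U))"
    using assms by (simp add: mult_of_gf2 points_outside_def)
  also have "\<dots> = card ((S \<inter> vecs N - {0}) \<inter> {x. x \<notin> U})"
    using finite_vecs[where 'a='a] by simp
  also have "(S \<inter> vecs N - {0}) \<inter> {x. x \<notin> U} = S \<inter> vecs N - U"
    using assms(2) by blast
  finally show ?thesis .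
qed

lemma ms_card_points_outside:
  "0 \<in> U \<Longrightarrow> ms_card N (points_outside U) = card (vecs N - (U :: (nat \<Rightarrow> 'a) set))"
  using mult_of_points_outside[of "vecs N" U N] by (simp add: ms_card_eq_mult_of_vecs)

lemma ms_card_points_outside_zero: "ms_card N (points_outside {0 :: nat \<Rightarrow> 'a}) = 2 ^ (N + 1) - 1"
  using card_vecs[of N, where 'a='a] card2 finite_vecs[of N, where 'a='a]
  by (simp add: ms_card_points_outside)

lemma ms_card_points_outside_coords:
  assumes "m \<le> N + 1"
  shows "ms_card N (points_outside {x :: nat \<Rightarrow> 'a. \<forall>i<m. x i = 0}) = 2 ^ (N + 1) - 2 ^ (N + 1 - m)"
proof -
  have "vecs N - {x. \<forall>i<m. x i = 0} = vecs N - {x \<in> vecs N. \<forall>i<m. (x :: nat \<Rightarrow> 'a) i = 0}"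
    by blast
  then show ?thesis
    using card_vecs_coord_zero[OF assms, where 'a='a] card_vecs[of N, where 'a='a] card2
      finite_vecs[of N, where 'a='a]
    by (simp add: ms_card_points_outside card_Diff_subset)
qed

lemma subspace_bounded_points_outside_zero:
  "subspace_bounded N r (2 ^ (r + 1) - 1) (points_outside {0 :: nat \<Rightarrow> 'a})"
  unfolding subspace_bounded_def
proof
  fix S :: "(nat \<Rightarrow> 'a) set" assume "S \<in> proj_subspaces N r"
  then have S: "lin_subspace_dim N (r + 1) S" by (simp add: proj_subspaces_def)
  have "S \<inter> vecs N - {0} = S - {0}" using lin_subspace_subset_vecs[OF S] by blast
  then show "mult_of N (points_outside {0}) S \<le> 2 ^ (r + 1) - 1"
    using lin_subspace_zero[OF S] card_lin_subspace[OF S] card2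
    by (simp add: mult_of_points_outside)
qed

lemma subspace_bounded_points_outside_coords:
  assumes "m \<le> r + 1"
  shows "subspace_bounded N r (2 ^ (r + 1) - 2 ^ (r + 1 - m)) (points_outside {x :: nat \<Rightarrow> 'a. \<forall>i<m. x i = 0})"
  unfolding subspace_bounded_def
proof
  fix S :: "(nat \<Rightarrow> 'a) set" assume "S \<in> proj_subspaces N r"
  then have S: "lin_subspace_dim N (r + 1) S" by (simp add: proj_subspaces_def)
  let ?U = "{x :: nat \<Rightarrow> 'a. \<forall>i<m. x i = 0}"
  have card_S: "card S = 2 ^ (r + 1)" using card_lin_subspace[OF S] card2 by simp
  then have fin: "finite S" by (intro card_ge_0_finite) simp
  have "2 ^ m * 2 ^ (r + 1 - m) \<le> 2 ^ m * card (S \<inter> ?U)"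
    using card_le_coord_zero[OF fin lin_subspace_add[OF S], of m] card_S assms
    by (simp add: Int_def flip: power_add)
  then have "2 ^ (r + 1 - m) \<le> card (S \<inter> ?U)" by simp
  moreover have "card (S - ?U) = card S - card (S \<inter> ?U)"
    using fin by (simp add: card_Diff_subset_Int)
  moreover have "S \<inter> vecs N - ?U = S - ?U" using lin_subspace_subset_vecs[OF S] by blast
  ultimately show "mult_of N (points_outside ?U) S \<le> 2 ^ (r + 1) - 2 ^ (r + 1 - m)"
    using lin_subspace_zero[OF S] card_S by (simp add: mult_of_points_outside)
qed

lemma translate_outside_subspace:
  assumes C: "\<And>a b. a \<in> C \<Longrightarrow> b \<in> C \<Longrightarrow> a + b \<in> C"
    and "c \<in> C" "y \<in> vecs N - C" "c \<in> vecs N"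
  shows "c + y \<in> vecs N - (C :: (nat \<Rightarrow> 'a) set)"
proof -
  have "c + y \<notin> C"
  proof
    assume "c + y \<in> C"
    then have "c + (c + y) \<in> C" using C \<open>c \<in> C\<close> by blast
    then show False using \<open>y \<in> vecs N - C\<close> by simp
  qed
  then show ?thesis using assms(3,4) add_in_vecs by blast
qed

lemma sum_translates_outside_subspace:
  fixes g :: "(nat \<Rightarrow> 'a) \<Rightarrow> nat"
  assumes C: "\<And>a b. a \<in> C \<Longrightarrow> b \<in> C \<Longrightarrow> a + b \<in> C" and "C \<subseteq> vecs N"
  shows "(\<Sum>y \<in> vecs N - C. \<Sum>c\<in>C. g (c + y)) = card C * (\<Sum>y \<in> vecs N - C. g y)"
proof -
  have "(\<Sum>y \<in> vecs N - C. \<Sum>c\<in>C. g (c + y)) = (\<Sum>c\<in>C. \<Sum>y \<in> vecs N - C. g (c + y))"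
    by (rule sum.swap)
  also have "\<dots> = (\<Sum>c\<in>C. \<Sum>y \<in> vecs N - C. g y)"
  proof (rule sum.cong)
    fix c assume "c \<in> C"
    then show "(\<Sum>y \<in> vecs N - C. g (c + y)) = (\<Sum>y \<in> vecs N - C. g y)"
      using translate_outside_subspace[OF C] assms(2) finite_vecs[of N, where 'a='a]
      by (intro sum_translate) auto
  qed simp
  finally show ?thesis by simp
qed

lemma sum_nonzero_split:
  fixes g :: "(nat \<Rightarrow> 'a) \<Rightarrow> nat"
  assumes "0 \<in> C" "C \<subseteq> vecs N"
  shows "(\<Sum>x \<in> vecs N - {0}. g x) = (\<Sum>x \<in> C - {0}. g x) + (\<Sum>x \<in> vecs N - C. g x)"
proof -
  have "vecs N - {0} = (C - {0}) \<union> (vecs N - C)" using assms by blast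
  moreover have "finite C" using assms(2) finite_vecs by (rule finite_subset)
  ultimately show ?thesis using finite_vecs[of N, where 'a='a]
    by (simp add: sum.union_disjoint Diff_Int_distrib2)
qed

lemma span1_add_closed:
  "a \<in> {0, p} \<Longrightarrow> b \<in> {0, p} \<Longrightarrow> a + b \<in> {0, p :: nat \<Rightarrow> 'a}"
  by auto

lemma span2_add_closed:
  "a \<in> {0, p, q, p + q} \<Longrightarrow> b \<in> {0, p, q, p + q} \<Longrightarrow> a + b \<in> {0, p, q, p + q :: nat \<Rightarrow> 'a}"
  by (auto simp: add_ac)

lemma exists_heavy_line_through:
  fixes g :: "(nat \<Rightarrow> 'a) \<Rightarrow> nat"
  assumes "N \<ge> 1" "p \<in> vecs N" "p \<noteq> 0"
  shows "\<exists>q \<in> vecs N - {0, p}.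
    2 * ((\<Sum>x \<in> vecs N - {0}. g x) - g p) \<le> (2 ^ (N + 1) - 2) * (g q + g (p + q))"
proof -
  let ?A = "vecs N - {0, p}"
  have pow: "(2::nat) ^ 2 \<le> 2 ^ (N + 1)" using assms(1) by (intro power_increasing) auto
  have card_A: "card ?A = 2 ^ (N + 1) - 2"
    using assms(2,3) card_vecs[of N, where 'a='a] card2 finite_vecs[of N, where 'a='a]
    by (simp add: card_Diff_subset)
  then have "?A \<noteq> {}" using pow by (intro notI) simp
  then obtain q where "q \<in> ?A"
    and q: "(\<Sum>y\<in>?A. \<Sum>c\<in>{0, p}. g (c + y)) \<le> card ?A * (\<Sum>c\<in>{0, p}. g (c + q))"
    using exists_ge_average[of ?A "\<lambda>y. \<Sum>c\<in>{0, p}. g (c + y)"] finite_vecs[of N, where 'a='a]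
    by auto
  moreover have "(\<Sum>y\<in>?A. \<Sum>c\<in>{0, p}. g (c + y)) = 2 * (\<Sum>y\<in>?A. g y)"
    using sum_translates_outside_subspace[OF span1_add_closed, of p N g] assms(2,3) by simp
  moreover have "(\<Sum>x \<in> vecs N - {0}. g x) = g p + (\<Sum>y\<in>?A. g y)"
    using sum_nonzero_split[of "{0, p}" N g] assms(2,3) by simp
  ultimately show ?thesis using card_A assms(3) by auto
qed

lemma card_vecs_minus_line:
  assumes "p \<in> vecs N" "q \<in> vecs N" "p \<noteq> 0" "q \<notin> {0, p}"
  shows "card (vecs N - {0, p, q, p + q :: nat \<Rightarrow> 'a}) = 2 ^ (N + 1) - 4"
proof -
  have "p + q \<noteq> 0" "p + q \<noteq> p" "p + q \<noteq> q" using assms(3,4) by auto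
  then have "card {0, p, q, p + q} = 4" using assms(3,4) by auto
  moreover have "{0, p, q, p + q} \<subseteq> vecs N" using assms(1,2) add_in_vecs by auto
  ultimately show ?thesis
    using card_vecs[of N, where 'a='a] card2 finite_vecs[of N, where 'a='a]
    by (simp add: card_Diff_subset)
qed

lemma planes_through_line_counting:
  fixes g :: "(nat \<Rightarrow> 'a) \<Rightarrow> nat"
  assumes "N \<ge> 2" "p \<in> vecs N" "q \<in> vecs N" "p \<noteq> 0" "q \<notin> {0, p}"
    and l: "l = g p + g q + g (p + q)"
    and plane: "\<And>y. y \<in> vecs N - {0, p, q, p + q} \<Longrightarrow>
      l + (g y + g (p + y) + g (q + y) + g (p + q + y)) \<le> w"
  shows "l \<le> w" and "l \<le> (\<Sum>x \<in> vecs N - {0}. g x)"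
    and "4 * ((\<Sum>x \<in> vecs N - {0}. g x) - l) \<le> (2 ^ (N + 1) - 4) * (w - l)"
proof -
  let ?L = "{0, p, q, p + q}" and ?R = "vecs N - {0, p, q, p + q}"
  have distinct: "p + q \<noteq> 0" "p + q \<noteq> p" "p + q \<noteq> q" using assms(4,5) by auto
  then have card_L: "card ?L = 4" using assms(4,5) by auto
  have L_vecs: "?L \<subseteq> vecs N" using assms(2,3) add_in_vecs by auto
  have card_R: "card ?R = 2 ^ (N + 1) - 4" using card_vecs_minus_line[OF assms(2-5)] .
  then have "?R \<noteq> {}"
    using power_increasing[of 3 "N + 1" "2::nat"] assms(1) by (intro notI) simp
  then show "l \<le> w" using plane by fastforce
  have "(\<Sum>x \<in> vecs N - {0}. g x) = l + (\<Sum>y\<in>?R. g y)"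
    using sum_nonzero_split[of ?L N g] L_vecs distinct assms(4,5) unfolding l
    by (simp add: insert_Diff_if add.assoc)
  then show "l \<le> (\<Sum>x \<in> vecs N - {0}. g x)" by simp
  have "4 * (\<Sum>y\<in>?R. g y) = (\<Sum>y\<in>?R. \<Sum>c\<in>?L. g (c + y))"
    using sum_translates_outside_subspace[OF span2_add_closed L_vecs] card_L by simp
  also have "\<dots> \<le> (\<Sum>y\<in>?R. w - l)"
  proof (rule sum_mono)
    fix y assume "y \<in> ?R"
    moreover have "(\<Sum>c\<in>?L. g (c + y)) = g y + g (p + y) + g (q + y) + g (p + q + y)"
      using assms(4,5) distinct by (simp add: add.assoc)
    ultimately show "(\<Sum>c\<in>?L. g (c + y)) \<le> w - l" using plane by fastforce
  qed
  finally show "4 * ((\<Sum>x \<in> vecs N - {0}. g x) - l) \<le> (2 ^ (N + 1) - 4) * (w - l)"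
    using card_R \<open>(\<Sum>x \<in> vecs N - {0}. g x) = l + (\<Sum>y\<in>?R. g y)\<close> by simp
qed

lemma griesmer_counting:
  fixes K :: "(nat \<Rightarrow> 'a) set \<Rightarrow> nat"
  assumes N: "N \<ge> 2" and bounded: "subspace_bounded N 2 w K"
  shows "\<exists>p0 l :: int. int (ms_card N K) \<le> (2 ^ (N + 1) - 1) * p0
    \<and> 2 * (int (ms_card N K) - p0) \<le> (2 ^ (N + 1) - 2) * (l - p0)
    \<and> 4 * (int (ms_card N K) - l) \<le> (2 ^ (N + 1) - 4) * (int w - l)"
proof -
  define g where "g x = K {0, x}" for x :: "nat \<Rightarrow> 'a"
  define n where "n = ms_card N K"
  have pow: "(2::nat) ^ 2 \<le> 2 ^ (N + 1)" using N by (intro power_increasing) auto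
  have fin: "finite (vecs N :: (nat \<Rightarrow> 'a) set)" by (rule finite_vecs)
  have n: "n = (\<Sum>x \<in> vecs N - {0}. g x)"
    unfolding n_def g_def ms_card_eq_mult_of_vecs by (simp add: mult_of_gf2)
  have card_V: "card (vecs N - {0 :: nat \<Rightarrow> 'a}) = 2 ^ (N + 1) - 1"
    using card_vecs[of N, where 'a='a] card2 fin by simp
  then have "vecs N - {0 :: nat \<Rightarrow> 'a} \<noteq> {}" using pow by (intro notI) simp
  then obtain p where p: "p \<in> vecs N" "p \<noteq> 0" and point: "n \<le> (2 ^ (N + 1) - 1) * g p"
    using exists_ge_average[of "vecs N - {0}" g] fin card_V n by auto
  obtain q where q: "q \<in> vecs N" "q \<notin> {0, p}"
    and line: "2 * (n - g p) \<le> (2 ^ (N + 1) - 2) * (g q + g (p + q))"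
    using exists_heavy_line_through[of N p g] N p n by auto
  define l where "l = g p + g q + g (p + q)"
  have "l + (g y + g (p + y) + g (q + y) + g (p + q + y)) \<le> w"
    if "y \<in> vecs N - {0, p, q, p + q}" for y
    using weight_plane_through_le[OF bounded p(1) q(1) _ p(2) q(2)] that
    unfolding l_def g_def by (simp add: add.assoc)
  from planes_through_line_counting[OF N p(1) q(1) p(2) q(2) l_def this]
  have "l \<le> w" "l \<le> n" and plane: "4 * (n - l) \<le> (2 ^ (N + 1) - 4) * (w - l)"
    unfolding n by simp_all
  have line': "2 * (n - g p) \<le> (2 ^ (N + 1) - 2) * (l - g p)" using line by (simp add: l_def)
  have "g p \<le> l" "g p \<le> n" using \<open>l \<le> n\<close> by (simp_all add: l_def)
  have "int n \<le> (2 ^ (N + 1) - 1) * int (g p)"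
    using int_le_diff_mult[OF point] pow by simp
  moreover have "2 * (int n - int (g p)) \<le> (2 ^ (N + 1) - 2) * (int l - int (g p))"
    using int_le_diff_mult[OF line'] pow \<open>g p \<le> l\<close> \<open>g p \<le> n\<close> by (simp add: of_nat_diff)
  moreover have "4 * (int n - int l) \<le> (2 ^ (N + 1) - 4) * (int w - int l)"
    using int_le_diff_mult[OF plane] pow \<open>l \<le> w\<close> \<open>l \<le> n\<close> by (simp add: of_nat_diff)
  ultimately show ?thesis unfolding n_def by blast
qed

lemma point_in_proj_points: "{0, (\<lambda>i. if i = 0 then 1 else 0)} \<in> (proj_points N :: (nat \<Rightarrow> 'a) set set)"
proof -
  have "(\<lambda>i. if i = 0 then 1 else 0) \<in> vecs N - {0 :: nat \<Rightarrow> 'a}"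
    by (auto simp: vecs_def fun_eq_iff)
  then show ?thesis unfolding proj_point_iff by blast
qed

lemma exists_subspace_bounded_mixture:
  assumes "N \<ge> 1"
  shows "\<exists>K :: (nat \<Rightarrow> 'a) set \<Rightarrow> nat. subspace_bounded N 2 (7 * a + 4 * b + 6 * c + d) K
    \<and> ms_card N K = a * (2 ^ (N + 1) - 1) + b * (2 ^ (N + 1) - 2 ^ N) + c * (2 ^ (N + 1) - 2 ^ (N - 1)) + d"
proof -
  let ?P0 = "{0, (\<lambda>i. if i = 0 then 1 else 0)} :: (nat \<Rightarrow> 'a) set"
  let ?Kz = "points_outside {0 :: nat \<Rightarrow> 'a}"
  let ?Ka = "points_outside {x :: nat \<Rightarrow> 'a. \<forall>i<1. x i = 0}"
  let ?Kb = "points_outside {x :: nat \<Rightarrow> 'a. \<forall>i<2. x i = 0}"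
  let ?Kp = "\<lambda>P. of_bool (P = ?P0)"
  let ?K = "(\<lambda>P. a * ?Kz P) + (\<lambda>P. b * ?Ka P) + (\<lambda>P. c * ?Kb P) + (\<lambda>P. d * ?Kp P)"
  have "subspace_bounded N 2 7 ?Kz"
    using subspace_bounded_points_outside_zero[of N 2] by simp
  moreover have "subspace_bounded N 2 4 ?Ka"
    using subspace_bounded_points_outside_coords[of 1 2 N] by simp
  moreover have "subspace_bounded N 2 6 ?Kb"
    using subspace_bounded_points_outside_coords[of 2 2 N] by simp
  moreover have "subspace_bounded N 2 1 ?Kp"
    using subspace_bounded_ms_card[of N 2 ?Kp] ms_card_point[OF point_in_proj_points] by simp
  ultimately have "subspace_bounded N 2 (a * 7 + b * 4 + c * 6 + d * 1) ?K"
    by (intro subspace_bounded_add subspace_bounded_scale)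
  moreover have "ms_card N ?K = a * (2 ^ (N + 1) - 1) + b * (2 ^ (N + 1) - 2 ^ N) + c * (2 ^ (N + 1) - 2 ^ (N - 1)) + d"
    using assms ms_card_points_outside_zero[of N] ms_card_points_outside_coords[of 1 N]
      ms_card_points_outside_coords[of 2 N] ms_card_point[OF point_in_proj_points]
    by (simp add: ms_card_add ms_card_scale)
  ultimately show ?thesis by (auto simp: mult.commute)
qed

lemma ms_card_le_griesmer:
  fixes K :: "(nat \<Rightarrow> 'a) set \<Rightarrow> nat"
  assumes N: "3 \<le> N" and w: "4 \<le> w" and bounded: "subspace_bounded N 2 w K"
  shows "int (ms_card N K) \<le> int w + (2 ^ (N - 2) - 1) * griesmer_excess w"
proof -
  define v :: int where "v = 2 ^ (N - 2) - 1"
  have v: "1 \<le> v" using N one_less_power[of "2::int" "N - 2"] unfolding v_def by linarith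
  have "(2::int) ^ (N + 1) = 2 ^ ((N - 2) + 3)" using N by (simp add: Suc_diff_le)
  then have Q: "(2::int) ^ (N + 1) = 8 * v + 8" by (simp add: v_def power_add)
  obtain p0 l :: int where "int (ms_card N K) \<le> (2 ^ (N + 1) - 1) * p0"
    "2 * (int (ms_card N K) - p0) \<le> (2 ^ (N + 1) - 2) * (l - p0)"
    "4 * (int (ms_card N K) - l) \<le> (2 ^ (N + 1) - 4) * (int w - l)"
    using griesmer_counting[OF _ bounded] N by auto
  then have "griesmer_tail v (int (ms_card N K) - int w) \<le> int w"
    unfolding Q by (intro griesmer_tail_le_of_counting[OF v, where p=p0 and l=l]) (simp_all add: algebra_simps)
  then show ?thesis using le_excess_of_griesmer_tail_le[OF v w] by (simp add: v_def)
qed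

lemma exists_subspace_bounded_griesmer:
  assumes N: "3 \<le> N" and w: "4 \<le> w"
  shows "\<exists>K :: (nat \<Rightarrow> 'a) set \<Rightarrow> nat. subspace_bounded N 2 w K
    \<and> int (ms_card N K) = int w + (2 ^ (N - 2) - 1) * griesmer_excess w"
proof -
  define P :: nat where "P = 2 ^ (N - 2)"
  have N_eq: "N = (N - 3) + 3" using N by simp
  have pows: "(2::nat) ^ (N + 1) = 8 * P" "(2::nat) ^ N = 4 * P" "(2::nat) ^ (N - 1) = 2 * P"
    unfolding P_def by (subst (1 2) N_eq, simp add: power_add)+
  have mixture: "\<exists>K :: (nat \<Rightarrow> 'a) set \<Rightarrow> nat. subspace_bounded N 2 w K
      \<and> int (ms_card N K) = int a * (8 * int P - 1) + int b * (4 * int P) + int c * (6 * int P) + int d"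
    if "7 * a + 4 * b + 6 * c + d = w" for a b c d
  proof -
    obtain K :: "(nat \<Rightarrow> 'a) set \<Rightarrow> nat" where "subspace_bounded N 2 (7 * a + 4 * b + 6 * c + d) K"
      and "ms_card N K = a * (2 ^ (N + 1) - 1) + b * (2 ^ (N + 1) - 2 ^ N) + c * (2 ^ (N + 1) - 2 ^ (N - 1)) + d"
      using exists_subspace_bounded_mixture[of N a b c d] N by auto
    moreover have "1 \<le> P" by (simp add: P_def)
    ultimately show ?thesis using that pows by (intro exI[of _ K]) (simp add: of_nat_diff)
  qed
  obtain t w0 :: nat and e where wt: "w = 7 * t + w0" and E: "griesmer_excess w = 8 * int t + e"
    and cases: "(e, w0) \<in> {(4, 4), (4, 5), (6, 6), (8, 7), (8, 8), (8, 9), (10, 10)}"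
    using griesmer_excess_cases[OF w] by blast
  have iP: "(2::int) ^ (N - 2) = int P" by (simp add: P_def)
  from cases show ?thesis
    using mixture[of t 1 0 0] mixture[of t 1 0 1] mixture[of t 0 1 0] mixture[of "t + 1" 0 0 0]
      mixture[of "t + 1" 0 0 1] mixture[of "t + 1" 0 0 2] mixture[of t 1 1 0] wt
    unfolding E iP by (auto simp: algebra_simps)
qed

end

theorem mainTheorem6:
  fixes k w :: nat
  assumes "card (UNIV :: 'a set) = 2"
    and "k \<ge> 4" and "w \<ge> 4"
  shows "int (m_max TYPE('a::{finite,field}) 2 (k - 1) w) = griesmer_bound 2 2 (k - 1) w"
proof -
  have N: "3 \<le> k - 1" using assms(2) by simp
  obtain K0 :: "(nat \<Rightarrow> 'a) set \<Rightarrow> nat" where K0: "subspace_bounded (k - 1) 2 w K0"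
    and card_K0: "int (ms_card (k - 1) K0) = int w + (2 ^ (k - 1 - 2) - 1) * griesmer_excess w"
    using exists_subspace_bounded_griesmer[OF assms(1) N assms(3)] by blast
  have "m_max TYPE('a) 2 (k - 1) w = ms_card (k - 1) K0"
  proof (rule m_max_eqI[OF K0])
    fix K :: "(nat \<Rightarrow> 'a) set \<Rightarrow> nat"
    assume "subspace_bounded (k - 1) 2 w K"
    then show "ms_card (k - 1) K \<le> ms_card (k - 1) K0"
      using ms_card_le_griesmer[OF assms(1) N assms(3)] card_K0 by fastforce
  qed
  then show ?thesis using card_K0 griesmer_bound_planes[OF N assms(3)] by simp
qed

end
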